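(* Let $H$ be $d^4/dx^4$ in $L_2(\mathbb{R}_+)$ with boundary conditions $u''(0)=\alpha u(0)+\alpha_1u'(0)$, $u'''(0)=-\alpha_2u(0)-\bar\alpha u'(0)$ ($\alpha\in\mathbb{C}$, $\alpha_1,\alpha_2\in\mathbb{R}$). The functions $s(\lambda)=\overline{\Omega(k)}/\Omega(k)$ and $b(\lambda)=(\alpha_0+2i\operatorname{Im}\alpha\,k^2+k^4)/\Omega(k)$, $k=\lambda^{1/4}$, are infinitely differentiable for all $\lambda>0$ (being extended by continuity at a positive eigenvalue of $H$, if there is one). If $\lambda_0$ is a positive eigenvalue of $H$, then $$s(\lambda_0)=\frac{\alpha+i\sqrt{\lambda_0}}{\alpha-i\sqrt{\lambda_0}},\qquad b(\lambda_0)=-\frac{2\sqrt{\lambda_0}}{\alpha-i\sqrt{\lambda_0}}.$$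
   Context: $\alpha_0=\alpha_1\alpha_2-|\alpha|^2$, $\Omega(\zeta)=\alpha_0+(1-i)\alpha_2\zeta+2i\operatorname{Re}\alpha\,\zeta^2-(1+i)\alpha_1\zeta^3-\zeta^4$. $H$ acts as $u\mapsto u^{(4)}$ on $u\in\mathsf{H}^4(\mathbb{R}_+)$ satisfying the boundary conditions; it is self-adjoint. *)

theory Defs
  imports "HOL-Analysis.Analysis"
begin

definition alpha0 :: "complex \<Rightarrow> real \<Rightarrow> real \<Rightarrow> complex" where
  "alpha0 \<alpha> \<alpha>1 \<alpha>2 = complex_of_real (\<alpha>1 * \<alpha>2 - (cmod \<alpha>)\<^sup>2)"

definition Omega :: "complex \<Rightarrow> real \<Rightarrow> real \<Rightarrow> complex \<Rightarrow> complex" where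
  "Omega \<alpha> \<alpha>1 \<alpha>2 \<zeta> = alpha0 \<alpha> \<alpha>1 \<alpha>2 + (1 - \<i>) * of_real \<alpha>2 * \<zeta>
     + 2 * \<i> * of_real (Re \<alpha>) * \<zeta>^2 - (1 + \<i>) * of_real \<alpha>1 * \<zeta>^3 - \<zeta>^4"

definition kk :: "real \<Rightarrow> complex" where
  "kk l = complex_of_real (root 4 l)"

definition s_fun :: "complex \<Rightarrow> real \<Rightarrow> real \<Rightarrow> real \<Rightarrow> complex" where
  "s_fun \<alpha> \<alpha>1 \<alpha>2 l = cnj (Omega \<alpha> \<alpha>1 \<alpha>2 (kk l)) / Omega \<alpha> \<alpha>1 \<alpha>2 (kk l)"

definition b_fun :: "complex \<Rightarrow> real \<Rightarrow> real \<Rightarrow> real \<Rightarrow> complex" where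
  "b_fun \<alpha> \<alpha>1 \<alpha>2 l = (alpha0 \<alpha> \<alpha>1 \<alpha>2 + 2 * \<i> * of_real (Im \<alpha>) * (kk l)^2 + (kk l)^4)
      / Omega \<alpha> \<alpha>1 \<alpha>2 (kk l)"

definition smooth_on :: "real set \<Rightarrow> (real \<Rightarrow> complex) \<Rightarrow> bool" where
  "smooth_on S f \<longleftrightarrow> (\<exists>D :: nat \<Rightarrow> real \<Rightarrow> complex.
      (\<forall>x\<in>S. D 0 x = f x) \<and>
      (\<forall>n. \<forall>x\<in>S. (D n has_vector_derivative D (Suc n) x) (at x)))"

definition L2_halfline :: "(real \<Rightarrow> complex) \<Rightarrow> bool" where
  "L2_halfline u \<longleftrightarrow> (\<lambda>x. (cmod (u x))\<^sup>2) integrable_on {0..}"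

definition is_eigenvalue_H :: "complex \<Rightarrow> real \<Rightarrow> real \<Rightarrow> real \<Rightarrow> bool" where
  "is_eigenvalue_H \<alpha> \<alpha>1 \<alpha>2 l \<longleftrightarrow>
    (\<exists>u u1 u2 u3 u4 :: real \<Rightarrow> complex.
      (\<forall>x\<ge>0. (u has_vector_derivative u1 x) (at x within {0..}) \<and>
              (u1 has_vector_derivative u2 x) (at x within {0..}) \<and>
              (u2 has_vector_derivative u3 x) (at x within {0..}) \<and>
              (u3 has_vector_derivative u4 x) (at x within {0..})) \<and>
      L2_halfline u \<and> L2_halfline u1 \<and> L2_halfline u2 \<and> L2_halfline u3 \<and> L2_halfline u4 \<and>
      u2 0 = \<alpha> * u 0 + of_real \<alpha>1 * u1 0 \<and>
      u3 0 = - of_real \<alpha>2 * u 0 - cnj \<alpha> * u1 0 \<and>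
      (\<forall>x\<ge>0. u4 x = of_real l * u x) \<and>
      (\<exists>x\<ge>0. u x \<noteq> 0))"

end

theory Submission
  imports Defs "HOL-Complex_Analysis.Complex_Analysis"
begin

text \<open>If \<open>\<lambda>\<^sub>0 = k\<^sup>4 > 0\<close> is an eigenvalue, the factors of
  \<open>D\<^sup>4 - k\<^sup>4\<close> whose roots have nonnegative real part admit no square integrable solutions,
  so the eigenfunction is \<open>u(0) e\<^sup>-\<^sup>k\<^sup>x\<close>, and the boundary conditions become
  \<open>\<alpha> = k\<^sup>2 + \<alpha>\<^sub>1 k\<close>, \<open>\<alpha>\<^sub>2 = k\<^sup>3 + \<alpha> k\<close>, which is exactly \<open>\<Omega>(k) = 0\<close>.
  Conversely every positive root of \<open>\<Omega>\<close> is of this form, is simple, and is also a root of the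
  numerators of \<open>s\<close> and \<open>b\<close>. So both quotients extend holomorphically to a neighbourhood of
  the positive axis in the \<open>k\<close>-plane; composed with the holomorphic \<open>\<lambda>\<^sup>1\<^sup>/\<^sup>4\<close> this gives
  smoothness, and l'Hopital's rule gives the values at \<open>\<lambda>\<^sub>0\<close>.\<close>

text \<open>Domination of \<open>|f|\<^sup>2\<close> by an integrable function, rather than integrability of
  \<open>|f|\<^sup>2\<close> itself, is closed under linear combinations without any measurability argument.\<close>
definition sq_dominated :: "(real \<Rightarrow> complex) \<Rightarrow> bool" where
  "sq_dominated f \<longleftrightarrow> (\<exists>g. g integrable_on {0..} \<and> (\<forall>x\<ge>0. (cmod (f x))\<^sup>2 \<le> g x))"

lemma L2_halfline_imp_sq_dominated: "L2_halfline f \<Longrightarrow> sq_dominated f"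
  unfolding L2_halfline_def sq_dominated_def by blast

lemma sq_dominated_mult:
  assumes "sq_dominated f"
  shows "sq_dominated (\<lambda>x. c * f x)"
proof -
  obtain g where "g integrable_on {0..}" and "\<forall>x\<ge>0. (cmod (f x))\<^sup>2 \<le> g x"
    using assms unfolding sq_dominated_def by blast
  then show ?thesis unfolding sq_dominated_def
    by (intro exI[of _ "\<lambda>x. (cmod c)\<^sup>2 * g x"])
       (auto intro: integrable_on_mult_right simp: norm_mult power_mult_distrib mult_left_mono)
qed

lemma sq_dominated_add:
  assumes "sq_dominated f" "sq_dominated g"
  shows "sq_dominated (\<lambda>x. f x + g x)"
proof -
  obtain F G where F: "F integrable_on {0..}" "\<forall>x\<ge>0. (cmod (f x))\<^sup>2 \<le> F x"
    and G: "G integrable_on {0..}" "\<forall>x\<ge>0. (cmod (g x))\<^sup>2 \<le> G x"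
    using assms unfolding sq_dominated_def by blast
  have "(cmod (f x + g x))\<^sup>2 \<le> 2 * F x + 2 * G x" if "x \<ge> 0" for x
  proof -
    have "(cmod (f x + g x))\<^sup>2 \<le> (cmod (f x) + cmod (g x))\<^sup>2"
      by (simp add: norm_triangle_ineq power_mono)
    also have "\<dots> \<le> 2 * (cmod (f x))\<^sup>2 + 2 * (cmod (g x))\<^sup>2"
      using sum_squares_ge_zero[of "cmod (f x) - cmod (g x)" 0]
      by (simp add: power2_eq_square algebra_simps)
    finally show ?thesis using F(2) G(2) that by fastforce
  qed
  with F(1) G(1) show ?thesis unfolding sq_dominated_def
    by (intro exI[of _ "\<lambda>x. 2 * F x + 2 * G x"]) (auto intro: integrable_add integrable_on_mult_right)
qed

lemma linear_ode_solution_halfline: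
  fixes f :: "real \<Rightarrow> complex"
  assumes "\<forall>x\<ge>0. (f has_vector_derivative c * f x) (at x within {0..})"
  shows "\<forall>x\<ge>0. f x = f 0 * exp (c * of_real x)"
proof -
  define h where "h x = f x * exp (- c * of_real x)" for x :: real
  have "(h has_vector_derivative 0) (at x within {0..})" if "x \<in> {0..}" for x
  proof -
    have "((\<lambda>x. exp (- c * of_real x)) has_vector_derivative exp (- c * of_real x) * (- c))
        (at x within {0..})"
      by (rule has_vector_derivative_real_field) (auto intro!: derivative_eq_intros)
    from has_vector_derivative_mult[OF _ this, of f "c * f x"]
    show ?thesis using assms that unfolding h_def by (simp add: algebra_simps)
  qed
  then obtain C where C: "\<And>x. x \<in> {0..} \<Longrightarrow> h x = C"
    using has_vector_derivative_zero_constant[of "{0..}" h] by (auto simp: convex_real_interval)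
  show ?thesis
  proof (intro allI impI)
    fix x :: real assume "x \<ge> 0"
    then have "f x * exp (- c * of_real x) = f 0"
      using C[of x] C[of 0] by (simp add: h_def)
    then have "f x * exp (- c * of_real x) * exp (c * of_real x) = f 0 * exp (c * of_real x)"
      by simp
    then show "f x = f 0 * exp (c * of_real x)"
      by (simp add: mult.assoc flip: exp_add)
  qed
qed

text \<open>A nonzero exponential with \<open>Re c \<ge> 0\<close> has modulus bounded below, so it cannot be
  square integrable on the half-line.\<close>
lemma sq_dominated_exp_eq_0:
  fixes f :: "real \<Rightarrow> complex"
  assumes exp: "\<forall>x\<ge>0. f x = f 0 * exp (c * of_real x)" and c: "Re c \<ge> 0"
    and "sq_dominated f"
  shows "f 0 = 0"
proof (rule ccontr)
  assume "f 0 \<noteq> 0"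
  define m where "m = (cmod (f 0))\<^sup>2"
  have m: "m > 0" using \<open>f 0 \<noteq> 0\<close> by (simp add: m_def)
  obtain g where g: "g integrable_on {0..}" and b: "\<forall>x\<ge>0. (cmod (f x))\<^sup>2 \<le> g x"
    using assms(3) unfolding sq_dominated_def by blast
  have gm: "m \<le> g x" if "x \<ge> 0" for x
  proof -
    have "cmod (f 0) \<le> cmod (f 0) * exp (Re c * x)"
      using c that by (simp add: mult_le_cancel_left1)
    also have "\<dots> = cmod (f x)" unfolding exp[rule_format, OF that] by (simp add: norm_mult)
    finally have "cmod (f 0) \<le> cmod (f x)" .
    then have "m \<le> (cmod (f x))\<^sup>2" unfolding m_def by (simp add: power_mono)
    then show ?thesis using b that by force
  qed
  have g_nonneg: "0 \<le> g x" if "x \<in> {0..}" for x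
    using gm[of x] m that by simp
  define t where "t = integral {0..} g / m + 1"
  have "0 \<le> integral {0..} g" by (rule integral_nonneg[OF g g_nonneg])
  then have t: "t \<ge> 0" using m by (simp add: t_def)
  have gt: "g integrable_on {0..t}"
    using integrable_on_subcbox[OF g, of 0 t] by simp
  have "t * m = integral {0..t} (\<lambda>x. m)" using t by simp
  also have "\<dots> \<le> integral {0..t} g"
    by (rule integral_le[OF _ gt]) (simp_all add: gm integrable_const_ivl)
  also have "\<dots> \<le> integral {0..} g"
    by (rule integral_subset_le[OF _ gt g]) (auto intro: g_nonneg)
  finally have "t * m \<le> integral {0..} g" .
  moreover have "t * m = integral {0..} g + m" using m by (simp add: t_def algebra_simps)
  ultimately show False using m by linarith
qed

lemma sq_dominated_linear_ode_eq_0: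
  fixes f :: "real \<Rightarrow> complex"
  assumes "\<forall>x\<ge>0. (f has_vector_derivative c * f x) (at x within {0..})" and "Re c \<ge> 0"
    and "sq_dominated f"
  shows "\<forall>x\<ge>0. f x = 0"
  using linear_ode_solution_halfline[OF assms(1)] sq_dominated_exp_eq_0[OF _ assms(2,3)]
  by (metis mult_zero_left)

lemma Omega_of_real_eq_0_iff:
  assumes k: "k > 0"
  shows "Omega \<alpha> \<alpha>1 \<alpha>2 (of_real k) = 0 \<longleftrightarrow>
    \<alpha> = of_real (k^2 + \<alpha>1 * k) \<and> \<alpha>2 = k^3 + (k^2 + \<alpha>1 * k) * k"
proof -
  have Omega_of_real: "Omega \<alpha> \<alpha>1 \<alpha>2 (of_real k) = Complex
      (\<alpha>1 * \<alpha>2 - ((Re \<alpha>)^2 + (Im \<alpha>)^2) + \<alpha>2 * k - \<alpha>1 * k^3 - k^4)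
      (- \<alpha>2 * k + 2 * Re \<alpha> * k^2 - \<alpha>1 * k^3)"
    by (simp add: complex_eq_iff Omega_def alpha0_def cmod_power2 flip: of_real_power)
  show ?thesis
  proof
    assume "Omega \<alpha> \<alpha>1 \<alpha>2 (of_real k) = 0"
    then have re: "\<alpha>1 * \<alpha>2 - ((Re \<alpha>)^2 + (Im \<alpha>)^2) + \<alpha>2 * k - \<alpha>1 * k^3 - k^4 = 0"
      and im: "- \<alpha>2 * k + 2 * Re \<alpha> * k^2 - \<alpha>1 * k^3 = 0"
      unfolding Omega_of_real by (simp_all add: complex_eq_iff)
    have "k * (2 * Re \<alpha> * k - \<alpha>1 * k^2 - \<alpha>2) = 0"
      using im by (simp add: power2_eq_square power3_eq_cube algebra_simps)
    then have \<alpha>2: "\<alpha>2 = 2 * Re \<alpha> * k - \<alpha>1 * k^2" using k by simp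
    \<comment> \<open>substituted into the real part, the equation becomes a sum of two squares\<close>
    have "(k^2 + \<alpha>1 * k - Re \<alpha>)^2 + (Im \<alpha>)^2 = 0"
      using re unfolding \<alpha>2 by (simp add: power2_eq_square power3_eq_cube power4_eq_xxxx algebra_simps)
    then have "Re \<alpha> = k^2 + \<alpha>1 * k" "Im \<alpha> = 0"
      by (simp_all add: sum_power2_eq_zero_iff)
    then show "\<alpha> = of_real (k^2 + \<alpha>1 * k) \<and> \<alpha>2 = k^3 + (k^2 + \<alpha>1 * k) * k"
      unfolding \<alpha>2 by (simp add: complex_eq_iff power2_eq_square power3_eq_cube algebra_simps)
  next
    assume "\<alpha> = of_real (k^2 + \<alpha>1 * k) \<and> \<alpha>2 = k^3 + (k^2 + \<alpha>1 * k) * k"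
    then show "Omega \<alpha> \<alpha>1 \<alpha>2 (of_real k) = 0"
      unfolding Omega_of_real
      by (simp add: complex_eq_iff power2_eq_square power3_eq_cube power4_eq_xxxx algebra_simps)
  qed
qed

text \<open>With \<open>K\<^sup>4 = \<lambda>\<close> the operator factors as
  \<open>D\<^sup>4 - K\<^sup>4 = (D - K)(D - iK)(D + iK)(D + K)\<close>. Each first-order factor \<open>D - c\<close> with
  \<open>Re c \<ge> 0\<close> has no nonzero square integrable kernel, so peeling them off one by one
  leaves \<open>u' = -K u\<close>.\<close>
lemma eigenfunction_derivatives:
  fixes u u1 u2 u3 u4 :: "real \<Rightarrow> complex" and k :: real
  defines "K \<equiv> complex_of_real k"
  assumes k: "k > 0"
    and D: "\<forall>x\<ge>0. (u has_vector_derivative u1 x) (at x within {0..}) \<and>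
                   (u1 has_vector_derivative u2 x) (at x within {0..}) \<and>
                   (u2 has_vector_derivative u3 x) (at x within {0..}) \<and>
                   (u3 has_vector_derivative u4 x) (at x within {0..})"
    and L: "L2_halfline u" "L2_halfline u1" "L2_halfline u2" "L2_halfline u3"
    and E: "\<forall>x\<ge>0. u4 x = K^4 * u x"
  shows "\<forall>x\<ge>0. u1 x = - K * u x \<and> u2 x = K^2 * u x \<and> u3 x = - (K^3 * u x)"
proof -
  note dom = L2_halfline_imp_sq_dominated[OF L(1)] L2_halfline_imp_sq_dominated[OF L(2)]
    L2_halfline_imp_sq_dominated[OF L(3)] L2_halfline_imp_sq_dominated[OF L(4)]
  define y where "y x = u3 x + K * u2 x + K^2 * u1 x + K^3 * u x" for x
  define z where "z x = u2 x + (K + \<i> * K) * u1 x + \<i> * K^2 * u x" for x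
  define w where "w x = u1 x + K * u x" for x
  have "(y has_vector_derivative K * y x) (at x within {0..})" if "x \<ge> 0" for x
  proof -
    have "(y has_vector_derivative u4 x + K * u3 x + K^2 * u2 x + K^3 * u1 x) (at x within {0..})"
      unfolding y_def using D that by (intro derivative_intros) auto
    then show ?thesis using E that by (simp add: y_def algebra_simps power_numeral_reduce)
  qed
  moreover have "sq_dominated y"
    unfolding y_def[abs_def] by (intro sq_dominated_add sq_dominated_mult dom)
  ultimately have y0: "\<forall>x\<ge>0. y x = 0"
    using sq_dominated_linear_ode_eq_0[of y K] k by (simp add: K_def)
  have "(z has_vector_derivative \<i> * K * z x) (at x within {0..})" if "x \<ge> 0" for x
  proof -
    have "(z has_vector_derivative u3 x + (K + \<i> * K) * u2 x + \<i> * K^2 * u1 x) (at x within {0..})"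
      unfolding z_def using D that by (intro derivative_intros) auto
    moreover have "u3 x = - K * u2 x - K^2 * u1 x - K^3 * u x"
      using y0 that by (simp add: y_def eq_neg_iff_add_eq_0 algebra_simps)
    ultimately show ?thesis by (simp add: z_def algebra_simps power_numeral_reduce)
  qed
  moreover have "sq_dominated z"
    unfolding z_def[abs_def] by (intro sq_dominated_add sq_dominated_mult dom)
  ultimately have z0: "\<forall>x\<ge>0. z x = 0"
    using sq_dominated_linear_ode_eq_0[of z "\<i> * K"] by (simp add: K_def)
  have "(w has_vector_derivative - \<i> * K * w x) (at x within {0..})" if "x \<ge> 0" for x
  proof -
    have "(w has_vector_derivative u2 x + K * u1 x) (at x within {0..})"
      unfolding w_def using D that by (intro derivative_intros) auto
    moreover have "u2 x = - (K + \<i> * K) * u1 x - \<i> * K^2 * u x"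
      using z0 that by (simp add: z_def eq_neg_iff_add_eq_0 algebra_simps)
    ultimately show ?thesis by (simp add: w_def algebra_simps power2_eq_square)
  qed
  moreover have "sq_dominated w"
    unfolding w_def[abs_def] by (intro sq_dominated_add sq_dominated_mult dom)
  ultimately have w0: "\<forall>x\<ge>0. w x = 0"
    using sq_dominated_linear_ode_eq_0[of w "- \<i> * K"] by (simp add: K_def)
  show ?thesis
  proof (intro allI impI conjI)
    fix x :: real assume x: "x \<ge> 0"
    show u1: "u1 x = - K * u x"
      using w0 x by (simp add: w_def eq_neg_iff_add_eq_0)
    have "u2 x = z x - (K + \<i> * K) * u1 x - \<i> * K^2 * u x" by (simp add: z_def)
    then show u2: "u2 x = K^2 * u x"
      using z0 x by (simp add: u1 algebra_simps power2_eq_square)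
    have "u3 x = y x - K * u2 x - K^2 * u1 x - K^3 * u x" by (simp add: y_def)
    then show "u3 x = - (K^3 * u x)"
      using y0 x by (simp add: u1 u2 algebra_simps power2_eq_square power3_eq_cube)
  qed
qed

lemma is_eigenvalue_H_imp_Omega_eq_0:
  assumes ev: "is_eigenvalue_H \<alpha> \<alpha>1 \<alpha>2 (k^4)" and k: "k > 0"
  shows "Omega \<alpha> \<alpha>1 \<alpha>2 (of_real k) = 0"
proof -
  define K where "K = complex_of_real k"
  obtain u u1 u2 u3 u4 :: "real \<Rightarrow> complex" where
    D: "\<forall>x\<ge>0. (u has_vector_derivative u1 x) (at x within {0..}) \<and>
              (u1 has_vector_derivative u2 x) (at x within {0..}) \<and>
              (u2 has_vector_derivative u3 x) (at x within {0..}) \<and>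
              (u3 has_vector_derivative u4 x) (at x within {0..})" and
    L: "L2_halfline u" "L2_halfline u1" "L2_halfline u2" "L2_halfline u3" and
    bc1: "u2 0 = \<alpha> * u 0 + of_real \<alpha>1 * u1 0" and
    bc2: "u3 0 = - of_real \<alpha>2 * u 0 - cnj \<alpha> * u1 0" and
    E: "\<forall>x\<ge>0. u4 x = of_real (k^4) * u x" and
    nz: "\<exists>x\<ge>0. u x \<noteq> 0"
    using ev unfolding is_eigenvalue_H_def by blast
  have E': "\<forall>x\<ge>0. u4 x = K^4 * u x" using E by (simp add: K_def)
  note derivs = eigenfunction_derivatives[OF k D L E'[unfolded K_def], folded K_def]
  have "\<forall>x\<ge>0. (u has_vector_derivative - K * u x) (at x within {0..})"
    using D derivs by auto
  from linear_ode_solution_halfline[OF this] nz have u0: "u 0 \<noteq> 0" by force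
  have "K^2 * u 0 = (\<alpha> - of_real \<alpha>1 * K) * u 0"
    using bc1 derivs by (simp add: algebra_simps)
  then have "K^2 = \<alpha> - of_real \<alpha>1 * K" using u0 by (metis mult_cancel_right)
  then have \<alpha>: "\<alpha> = K^2 + of_real \<alpha>1 * K" by (simp add: algebra_simps)
  have "- (K^3 * u 0) = (cnj \<alpha> * K - of_real \<alpha>2) * u 0"
    using bc2 derivs by (simp add: algebra_simps)
  then have "- (K^3) = cnj \<alpha> * K - of_real \<alpha>2" using u0 by (metis mult_cancel_right mult_minus_left)
  then have "of_real \<alpha>2 = K^3 + cnj \<alpha> * K" by (simp add: algebra_simps)
  then have "\<alpha>2 = k^3 + (k^2 + \<alpha>1 * k) * k"
    unfolding \<alpha> K_def by (simp flip: of_real_power of_real_mult of_real_add)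
  moreover have "\<alpha> = of_real (k^2 + \<alpha>1 * k)" unfolding \<alpha> K_def by simp
  ultimately show ?thesis using Omega_of_real_eq_0_iff[OF k] by blast
qed

lemma holomorphic_on_removable_quotient:
  fixes N D :: "complex \<Rightarrow> complex"
  assumes N: "\<And>z. (N has_field_derivative N' z) (at z)"
    and D: "\<And>z. (D has_field_derivative D' z) (at z)"
    and U: "open U" and fin: "finite {z. D z = 0}"
    and zeros: "\<And>z. z \<in> U \<Longrightarrow> D z = 0 \<Longrightarrow> N z = 0 \<and> D' z \<noteq> 0"
  shows "(\<lambda>z. if D z = 0 then N' z / D' z else N z / D z) holomorphic_on U"
    (is "?F holomorphic_on U")
proof (rule no_isolated_singularity')
  let ?Z = "{z. D z = 0}"
  show "finite (U \<inter> ?Z)" using fin by simp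
  have "N holomorphic_on A" "D holomorphic_on A" for A
    using N D by (auto simp: holomorphic_on_def field_differentiable_def intro: has_field_derivative_at_within)
  then have "(\<lambda>z. N z / D z) holomorphic_on U - U \<inter> ?Z"
    by (intro holomorphic_on_divide) auto
  then show "?F holomorphic_on U - U \<inter> ?Z"
    by (rule holomorphic_transform) auto
  fix z0 assume z0: "z0 \<in> U \<inter> ?Z"
  have "((\<lambda>z. N z / D z) \<longlongrightarrow> N' z0 / D' z0) (at z0)"
    using zeros[of z0] z0 by (intro lhopital_complex_simple[OF N D]) auto
  moreover have "eventually (\<lambda>z. z \<in> - (?Z - {z0}) - {z0}) (at z0)"
    using fin by (intro eventually_at_in_open open_Compl finite_imp_closed) auto
  then have "eventually (\<lambda>z. N z / D z = ?F z) (at z0)"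
    by eventually_elim auto
  ultimately have "(?F \<longlongrightarrow> ?F z0) (at z0)"
    using z0 by (auto intro: Lim_transform_eventually)
  then show "(?F \<longlongrightarrow> ?F z0) (at z0 within U)"
    by (rule tendsto_within_subset) simp
qed (fact U)

lemma smooth_on_holomorphic_restrict:
  assumes h: "h holomorphic_on V" and V: "open V"
    and S: "\<And>x. x \<in> S \<Longrightarrow> of_real x \<in> V" and f: "\<And>x. x \<in> S \<Longrightarrow> h (of_real x) = f x"
  shows "smooth_on S f"
proof -
  have "((deriv ^^ n) h has_field_derivative deriv ((deriv ^^ n) h) z) (at z)" if "z \<in> V" for n z
    using holomorphic_derivI[OF holomorphic_higher_deriv[OF h V] V that, of n UNIV] by simp
  then show ?thesis unfolding smooth_on_def
    by (intro exI[of _ "\<lambda>n x. (deriv ^^ n) h (of_real x)"])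
       (auto intro!: has_vector_derivative_real_field S simp: f)
qed

lemma kk_eq_powr:
  assumes "l > 0"
  shows "kk l = complex_of_real l powr (1/4)"
proof -
  have "complex_of_real l powr (1/4) = complex_of_real l powr complex_of_real (1/4)" by simp
  also have "\<dots> = complex_of_real (l powr (1/4))" using assms by (intro powr_of_real) simp
  finally show ?thesis using assms by (simp add: kk_def root_powr_inverse)
qed

text \<open>On the right half-plane \<open>w powr (1/4)\<close> is a holomorphic extension of \<open>kk\<close>.\<close>
lemma smooth_on_holomorphic_comp_kk:
  assumes g: "g holomorphic_on U" and U: "open U" and kk: "\<And>l. l > 0 \<Longrightarrow> kk l \<in> U"
  shows "smooth_on {0<..} (\<lambda>l. g (kk l))"
proof (rule smooth_on_holomorphic_restrict)
  define V where "V = {w. Re w > 0} \<inter> (\<lambda>w. w powr (1/4)) -` U"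
  have root: "(\<lambda>w. w powr (1/4)) holomorphic_on {w. Re w > 0}"
    by (intro holomorphic_intros) (auto simp: complex_nonpos_Reals_iff)
  show "open V" unfolding V_def
    using holomorphic_on_imp_continuous_on[OF root] U
    by (intro continuous_open_preimage) (auto simp: open_halfspace_Re_gt)
  show "(g \<circ> (\<lambda>w. w powr (1/4))) holomorphic_on V"
    by (rule holomorphic_on_compose[OF holomorphic_on_subset[OF root] holomorphic_on_subset[OF g]])
       (auto simp: V_def)
  fix l :: real assume "l \<in> {0<..}"
  then show "of_real l \<in> V" and "(g \<circ> (\<lambda>w. w powr (1/4))) (of_real l) = g (kk l)"
    using kk[of l] by (auto simp: V_def kk_eq_powr)
qed

definition Omega_deriv :: "complex \<Rightarrow> real \<Rightarrow> real \<Rightarrow> complex \<Rightarrow> complex" where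
  "Omega_deriv \<alpha> \<alpha>1 \<alpha>2 z = (1 - \<i>) * of_real \<alpha>2 + 4 * \<i> * of_real (Re \<alpha>) * z
     - 3 * (1 + \<i>) * of_real \<alpha>1 * z^2 - 4 * z^3"

definition b_numer :: "complex \<Rightarrow> real \<Rightarrow> real \<Rightarrow> complex \<Rightarrow> complex" where
  "b_numer \<alpha> \<alpha>1 \<alpha>2 z = alpha0 \<alpha> \<alpha>1 \<alpha>2 + 2 * \<i> * of_real (Im \<alpha>) * z^2 + z^4"

definition b_numer_deriv :: "complex \<Rightarrow> complex \<Rightarrow> complex" where
  "b_numer_deriv \<alpha> z = 4 * \<i> * of_real (Im \<alpha>) * z + 4 * z^3"

lemma has_field_derivative_Omega:
  "(Omega \<alpha> \<alpha>1 \<alpha>2 has_field_derivative Omega_deriv \<alpha> \<alpha>1 \<alpha>2 z) (at z)"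
  unfolding Omega_def[abs_def] Omega_deriv_def
  by (rule derivative_eq_intros refl)+ (simp add: algebra_simps power2_eq_square power3_eq_cube)

lemma has_field_derivative_b_numer:
  "(b_numer \<alpha> \<alpha>1 \<alpha>2 has_field_derivative b_numer_deriv \<alpha> z) (at z)"
  unfolding b_numer_def[abs_def] b_numer_deriv_def
  by (rule derivative_eq_intros refl)+ (simp add: algebra_simps power2_eq_square power3_eq_cube)

lemma finite_Omega_zeros: "finite {z. Omega \<alpha> \<alpha>1 \<alpha>2 z = 0}"
proof -
  have Omega_poly: "Omega \<alpha> \<alpha>1 \<alpha>2 z = poly [:alpha0 \<alpha> \<alpha>1 \<alpha>2, (1 - \<i>) * of_real \<alpha>2, 2 * \<i> * of_real (Re \<alpha>),
      - (1 + \<i>) * of_real \<alpha>1, -1:] z" for z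
    by (simp add: Omega_def algebra_simps power2_eq_square power3_eq_cube power4_eq_xxxx)
  show ?thesis unfolding Omega_poly by (rule poly_roots_finite) simp
qed

lemma Omega_real_root_quotients:
  assumes k: "k > 0" and root: "Omega \<alpha> \<alpha>1 \<alpha>2 (of_real k) = 0"
  shows "Omega_deriv \<alpha> \<alpha>1 \<alpha>2 (of_real k) \<noteq> 0"
    and "b_numer \<alpha> \<alpha>1 \<alpha>2 (of_real k) = 0"
    and "cnj (Omega_deriv \<alpha> \<alpha>1 \<alpha>2 (of_real k)) / Omega_deriv \<alpha> \<alpha>1 \<alpha>2 (of_real k)
           = (\<alpha> + \<i> * of_real (k^2)) / (\<alpha> - \<i> * of_real (k^2))"
    and "b_numer_deriv \<alpha> (of_real k) / Omega_deriv \<alpha> \<alpha>1 \<alpha>2 (of_real k)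
           = - (2 * of_real (k^2)) / (\<alpha> - \<i> * of_real (k^2))"
proof -
  have \<alpha>: "\<alpha> = of_real (k^2 + \<alpha>1 * k)" and \<alpha>2: "\<alpha>2 = k^3 + (k^2 + \<alpha>1 * k) * k"
    using root Omega_of_real_eq_0_iff[OF k] by auto
  have deriv: "Omega_deriv \<alpha> \<alpha>1 \<alpha>2 (of_real k) = - 2 * of_real k * (\<alpha> - \<i> * of_real (k^2))"
    unfolding Omega_deriv_def \<alpha>2 \<alpha>
    by (simp add: complex_eq_iff power2_eq_square power3_eq_cube algebra_simps flip: of_real_power)
  have "Im (\<alpha> - \<i> * of_real (k^2)) = - (k^2)" by (simp add: \<alpha>)
  then have ne: "\<alpha> - \<i> * of_real (k^2) \<noteq> 0" using k by force
  then show "Omega_deriv \<alpha> \<alpha>1 \<alpha>2 (of_real k) \<noteq> 0"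
    using k by (simp add: deriv)
  show "b_numer \<alpha> \<alpha>1 \<alpha>2 (of_real k) = 0"
    unfolding b_numer_def alpha0_def \<alpha>2 \<alpha>
    by (simp add: complex_eq_iff cmod_power2 flip: of_real_power)
       (simp add: power2_eq_square power3_eq_cube power4_eq_xxxx algebra_simps)
  have "cnj (\<alpha> - \<i> * of_real (k^2)) = \<alpha> + \<i> * of_real (k^2)" by (simp add: \<alpha>)
  then show "cnj (Omega_deriv \<alpha> \<alpha>1 \<alpha>2 (of_real k)) / Omega_deriv \<alpha> \<alpha>1 \<alpha>2 (of_real k)
           = (\<alpha> + \<i> * of_real (k^2)) / (\<alpha> - \<i> * of_real (k^2))"
    using k by (simp add: deriv)
  have b_numer_deriv: "b_numer_deriv \<alpha> (of_real k) = - 2 * of_real k * (- (2 * of_real (k^2)))"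
    by (simp add: b_numer_deriv_def \<alpha> power2_eq_square power3_eq_cube)
  show "b_numer_deriv \<alpha> (of_real k) / Omega_deriv \<alpha> \<alpha>1 \<alpha>2 (of_real k)
           = - (2 * of_real (k^2)) / (\<alpha> - \<i> * of_real (k^2))"
    unfolding deriv b_numer_deriv using k by (intro mult_divide_mult_cancel_left) simp
qed

text \<open>The zeros of \<open>\<Omega>\<close> on the positive axis are simple and shared by the numerator,
  so the quotient extends holomorphically across them; the other zeros are cut out of the
  right half-plane.\<close>
lemma smooth_on_Omega_quotient:
  fixes N N' :: "complex \<Rightarrow> complex"
  assumes N: "\<And>z. (N has_field_derivative N' z) (at z)"
    and zero: "\<And>k. k > 0 \<Longrightarrow> Omega \<alpha> \<alpha>1 \<alpha>2 (of_real k) = 0 \<Longrightarrow> N (of_real k) = 0"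
  shows "smooth_on {0<..} (\<lambda>l. if Omega \<alpha> \<alpha>1 \<alpha>2 (kk l) = 0
           then N' (kk l) / Omega_deriv \<alpha> \<alpha>1 \<alpha>2 (kk l) else N (kk l) / Omega \<alpha> \<alpha>1 \<alpha>2 (kk l))"
proof (rule smooth_on_holomorphic_comp_kk)
  let ?O = "Omega \<alpha> \<alpha>1 \<alpha>2"
  define U where "U = {z. Re z > 0} - {z. ?O z = 0 \<and> Im z \<noteq> 0}"
  have "finite {z. ?O z = 0 \<and> Im z \<noteq> 0}"
    by (rule finite_subset[OF _ finite_Omega_zeros]) auto
  then show "open U" unfolding U_def
    by (intro open_Diff finite_imp_closed) (auto simp: open_halfspace_Re_gt)
  show "kk l \<in> U" if "l > 0" for l
    using that by (simp add: U_def kk_def)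
  show "(\<lambda>z. if ?O z = 0 then N' z / Omega_deriv \<alpha> \<alpha>1 \<alpha>2 z else N z / ?O z) holomorphic_on U"
  proof (rule holomorphic_on_removable_quotient[OF N has_field_derivative_Omega \<open>open U\<close> finite_Omega_zeros])
    fix z assume z: "z \<in> U" "?O z = 0"
    then have k: "Re z > 0" and z_eq: "z = of_real (Re z)"
      by (auto simp: U_def complex_eq_iff)
    then show "N z = 0 \<and> Omega_deriv \<alpha> \<alpha>1 \<alpha>2 z \<noteq> 0"
      using zero[OF k] Omega_real_root_quotients(1)[OF k] z(2) by (metis z_eq)
  qed
qed

theorem proposition5p10:
  fixes \<alpha> :: complex and \<alpha>1 \<alpha>2 :: real
  shows "\<exists>S B :: real \<Rightarrow> complex.
    (\<forall>l>0. Omega \<alpha> \<alpha>1 \<alpha>2 (kk l) \<noteq> 0 \<longrightarrow>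
        S l = s_fun \<alpha> \<alpha>1 \<alpha>2 l \<and> B l = b_fun \<alpha> \<alpha>1 \<alpha>2 l) \<and>
    smooth_on {0<..} S \<and> smooth_on {0<..} B \<and>
    (\<forall>l0>0. is_eigenvalue_H \<alpha> \<alpha>1 \<alpha>2 l0 \<longrightarrow>
        S l0 = (\<alpha> + \<i> * of_real (sqrt l0)) / (\<alpha> - \<i> * of_real (sqrt l0)) \<and>
        B l0 = - (2 * of_real (sqrt l0)) / (\<alpha> - \<i> * of_real (sqrt l0)))"
proof -
  let ?O = "Omega \<alpha> \<alpha>1 \<alpha>2" and ?O' = "Omega_deriv \<alpha> \<alpha>1 \<alpha>2"
  define S where "S l = (if ?O (kk l) = 0 then cnj (?O' (cnj (kk l))) / ?O' (kk l)
                         else cnj (?O (cnj (kk l))) / ?O (kk l))" for l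
  define B where "B l = (if ?O (kk l) = 0 then b_numer_deriv \<alpha> (kk l) / ?O' (kk l)
                         else b_numer \<alpha> \<alpha>1 \<alpha>2 (kk l) / ?O (kk l))" for l
  have "((\<lambda>z. cnj (?O (cnj z))) has_field_derivative cnj (?O' (cnj z))) (at z)" for z
    using has_field_derivative_cnj_cnj[OF has_field_derivative_Omega] by (simp add: comp_def)
  then have "smooth_on {0<..} S" unfolding S_def[abs_def]
    by (rule smooth_on_Omega_quotient) simp
  moreover have "smooth_on {0<..} B" unfolding B_def[abs_def]
    by (rule smooth_on_Omega_quotient[OF has_field_derivative_b_numer Omega_real_root_quotients(2)])
  moreover have "\<forall>l>0. ?O (kk l) \<noteq> 0 \<longrightarrow> S l = s_fun \<alpha> \<alpha>1 \<alpha>2 l \<and> B l = b_fun \<alpha> \<alpha>1 \<alpha>2 l"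
    by (simp add: S_def B_def s_fun_def b_fun_def b_numer_def kk_def)
  moreover have "S l0 = (\<alpha> + \<i> * of_real (sqrt l0)) / (\<alpha> - \<i> * of_real (sqrt l0)) \<and>
      B l0 = - (2 * of_real (sqrt l0)) / (\<alpha> - \<i> * of_real (sqrt l0))"
    if l0: "l0 > 0" and ev: "is_eigenvalue_H \<alpha> \<alpha>1 \<alpha>2 l0" for l0
  proof -
    define k where "k = root 4 l0"
    have k: "k > 0" and "l0 = k^4" using l0 by (simp_all add: k_def real_root_pow_pos2)
    then have root: "?O (of_real k) = 0" and "sqrt l0 = k^2"
      using is_eigenvalue_H_imp_Omega_eq_0 ev by (auto simp: real_sqrt_unique power_mult[symmetric])
    then show ?thesis
      using Omega_real_root_quotients[OF k root] by (simp add: S_def B_def kk_def k_def)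
  qed
  ultimately show ?thesis by blast
qed

end
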